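(* Let $\mathbb P_{\mathcal A}$ be any probability measure on $\mathcal A$, let $\xi=\lambda^{-1}$, and let $f\colon\Delta\to\Delta$ be the Bernoulli Young tower defined by $(\mathcal A,\mathbb P_{\mathcal A})$, $h_{\mathcal A}$ and $\xi$. Let $\pi\colon\Delta\to\Lambda$ be as defined in the context. Then for all $a,b\in\Delta$, $$d_\Lambda(\pi(a),\pi(b))\le C_\Lambda\, d(a,b),\qquad C_\Lambda=\lambda C_\ell\operatorname{diam}\Lambda.$$
   Context: Nonuniformly expanding map: $(\Lambda,d_\Lambda)$ is a bounded complete metric space and $T\colon\Lambda\to\Lambda$ is Borel measurable. $Y\subset\Lambda$ is closed, $m$ is a Borel probability measure on $Y$, and $\alpha$ is an at most countable partition of $Y$ (modulo an $m$-null set) with $m(a)>0$ and $m(\bar a\setminus a)=0$ for all $a\in\alpha$. $\tau\colon Y\to\mathbb{N}$ is integrable, constant on each $a\in\alpha$ with value $\tau(a)$, and $T^{\tau(y)}(y)\in Y$ for all $y\in Y$. There are constants $0<\eta\le 1$, $\lambda>1$, $C_\ell,K\ge1$ and for each $a\in\alpha$ a map $T_a\colon\Lambda\to\Lambda$ with $T_a^\ell=T^\ell$ $m$-a.s. on $\bar a$ for $0\le\ell<\tau(a)$, such that $T_{Y,a}:=T_a^{\tau(a)}$ is a bijection $\bar a\to Y$ and for all $x,y\in\bar a$: (i) $d_\Lambda(T_{Y,a}x,T_{Y,a}y)\ge\lambda d_\Lambda(x,y)$; (ii) $d_\Lambda(T_a^\ell x,T_a^\ell y)\le C_\ell\, d_\Lambda(T_{Y,a}x,T_{Y,a}y)$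 for $0\le \ell<\tau(a)$; (iii) $T_{Y,a}\colon\bar a\to Y$ is nonsingular and its inverse Jacobian $\zeta=\frac{dm}{dm\circ T_{Y,a}}$ satisfies $|\log\zeta(x)-\log\zeta(y)|\le K d_\Lambda(T_{Y,a}x,T_{Y,a}y)^\eta$. Words: $\mathcal A$ is the set of all nonempty finite words $w=a_0\cdots a_{n-1}$ over $\alpha$; $h_{\mathcal A}(w)=\tau(a_0)+\dots+\tau(a_{n-1})$, $T_{Y,w}=T_{Y,a_{n-1}}\circ\cdots\circ T_{Y,a_0}$, $Y_w=(T_{Y,a_{n-1}}\circ\cdots\circ T_{Y,a_0})^{-1}(Y)$. For a word $w=a_0\cdots a_{n-1}$ and $0\le\ell<h_{\mathcal A}(w)$, writing $\ell=\tau(a_0)+\dots+\tau(a_{j-1})+r$ with $0\le r<\tau(a_j)$, set $T_w^\ell=T_{a_j}^r\circ T_{Y,a_{j-1}}\circ\cdots\circ T_{Y,a_0}$ on $Y_w$. Concatenation of words is denoted $w_0w_1\cdots w_n$. Bernoulli Young tower: given an at most countable probability space $(\mathcal{A},\mathbb{P}_{\mathcal A})$, an integrable $h_{\mathcal A}\colon\mathcal A\to\mathbb N$ and $0<\xi<1$, let $(X,\mathbb P_X)=(\mathcal A^{\mathbb N},\mathbb P_{\mathcal A}^{\mathbb N})$ with left shift $f_X$, $h(a_0,a_1,\dots)=h_{\mathcal A}(a_0)$, $\Delta=\{(x,\ell)\in X\times\mathbb Z:0\le\ell<h(x)\}$, $f(x,\ell)=(x,\ell+1)$ if $\ell<h(x)-1$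 and $f(x,\ell)=(f_Xx,0)$ if $\ell=h(x)-1$. On $X$, $d(x,y)=\xi^{s(x,y)}$ with $s((a_j),(b_j))=\inf\{j\ge0:a_j\ne b_j\}$; on $\Delta$, $d((x,k),(y,j))=1$ if $k\ne j$ and $=d(x,y)$ if $k=j$. $\mathbb P$ is the $f$-invariant probability on $\Delta$ with $\mathbb P(A\times\{\ell\})=\bar h^{-1}\mathbb P_X(A)$ for $A\subset\{h\ge\ell+1\}$, $\bar h=\int h\,d\mathbb P_X$. The base $\Delta_0=\{(x,0)\}$ is identified with $X$. The map $\pi$: for $x=(w_0,w_1,\dots)\in X$, $\pi_X(x)$ is the unique point of $\bigcap_{n\ge0}Y_{w_0\cdots w_n}$ (nested closed sets with diameters $\to0$), and $\pi((w_0,w_1,\dots),\ell)=T_{w_0}^\ell(\pi_X(w_0,w_1,\dots))$. *)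

theory Defs
  imports "HOL-Probability.Probability"
begin

definition words :: "'a set set \<Rightarrow> 'a set list set" where
  "words \<alpha> = {w. w \<noteq> [] \<and> set w \<subseteq> \<alpha>}"

definition hword :: "('a set \<Rightarrow> nat) \<Rightarrow> 'a set list \<Rightarrow> nat" where
  "hword \<tau>A w = sum_list (map \<tau>A w)"

definition TYa :: "('a set \<Rightarrow> 'a \<Rightarrow> 'a) \<Rightarrow> ('a set \<Rightarrow> nat) \<Rightarrow> 'a set \<Rightarrow> 'a \<Rightarrow> 'a" where
  "TYa Ta \<tau>A a = Ta a ^^ \<tau>A a"

fun cyl :: "'a::topological_space set \<Rightarrow> ('a set \<Rightarrow> 'a \<Rightarrow> 'a) \<Rightarrow> 'a set list \<Rightarrow> 'a set" where
  "cyl Y TY [] = Y"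
| "cyl Y TY (a # w) = {y \<in> closure a. TY a y \<in> cyl Y TY w}"

fun Tword :: "('a set \<Rightarrow> 'a \<Rightarrow> 'a) \<Rightarrow> ('a set \<Rightarrow> nat) \<Rightarrow> 'a set list \<Rightarrow> nat \<Rightarrow> 'a \<Rightarrow> 'a" where
  "Tword Ta \<tau>A [] l = id"
| "Tword Ta \<tau>A (a # w) l =
     (if l < \<tau>A a then Ta a ^^ l else Tword Ta \<tau>A w (l - \<tau>A a) \<circ> (Ta a ^^ \<tau>A a))"

definition towerX :: "'a set set \<Rightarrow> (nat \<Rightarrow> 'a set list) set" where
  "towerX \<alpha> = {x. \<forall>j. x j \<in> words \<alpha>}"

definition tower :: "'a set set \<Rightarrow> ('a set \<Rightarrow> nat) \<Rightarrow> ((nat \<Rightarrow> 'a set list) \<times> nat) set" where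
  "tower \<alpha> \<tau>A = {(x, l). x \<in> towerX \<alpha> \<and> l < hword \<tau>A (x 0)}"

definition dX :: "real \<Rightarrow> (nat \<Rightarrow> 'b) \<Rightarrow> (nat \<Rightarrow> 'b) \<Rightarrow> real" where
  "dX \<xi> x y = (if x = y then 0 else \<xi> ^ (LEAST j. x j \<noteq> y j))"

definition dTower :: "real \<Rightarrow> ((nat \<Rightarrow> 'b) \<times> nat) \<Rightarrow> ((nat \<Rightarrow> 'b) \<times> nat) \<Rightarrow> real" where
  "dTower \<xi> p q = (if snd p \<noteq> snd q then 1 else dX \<xi> (fst p) (fst q))"

definition piX :: "'a::topological_space set \<Rightarrow> ('a set \<Rightarrow> 'a \<Rightarrow> 'a) \<Rightarrow> ('a set \<Rightarrow> nat)
    \<Rightarrow> (nat \<Rightarrow> 'a set list) \<Rightarrow> 'a" where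
  "piX Y Ta \<tau>A x = (THE p. p \<in> (\<Inter>n. cyl Y (TYa Ta \<tau>A) (concat (map x [0..<Suc n]))))"

definition piTower :: "'a::topological_space set \<Rightarrow> ('a set \<Rightarrow> 'a \<Rightarrow> 'a) \<Rightarrow> ('a set \<Rightarrow> nat)
    \<Rightarrow> (nat \<Rightarrow> 'a set list) \<times> nat \<Rightarrow> 'a" where
  "piTower Y Ta \<tau>A p = Tword Ta \<tau>A (fst p 0) (snd p) (piX Y Ta \<tau>A (fst p))"

end

theory Submission
  imports Defs
begin

text \<open>For every n the point piX x lies in the cylinder of the word x 0 x 1 ... x n: pulling
  a point of Y back along the inverse branches, which are (1/lam)-Lipschitz, gives Cauchy
  sequences, and by expansion a cylinder of a word of length k has diameter at most lam^-k D,
  where D = diam Lambda. If (x, l) and (y, l) lie on the same level and x, y first differ at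
  index s \<ge> 1, then piX x and piX y lie in the cylinder of x 0 V with V = x 1 ... x (s-1) of
  length at least s - 1. The map Tword (x 0) l consists of some full returns followed by fewer
  than tau(a) iterates of one branch, so by (ii) it costs only the factor Cl, which gives
  Cl D lam^(1-s) = C_Lambda d((x, l), (y, l)). Different levels, or s = 0, are at distance 1
  and covered by the trivial bound D \<le> C_Lambda.\<close>

lemma cyl_append: "cyl Y TY (w @ v) = cyl (cyl Y TY v) TY w"
  by (induction w) auto

lemma cyl_mono: "Y \<subseteq> Y' \<Longrightarrow> cyl Y TY w \<subseteq> cyl Y' TY w"
  by (induction w) auto

lemma cyl_subset:
  assumes "closed Y" "\<And>a. a \<in> \<alpha> \<Longrightarrow> a \<subseteq> Y" "set w \<subseteq> \<alpha>"
  shows "cyl Y TY w \<subseteq> Y"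
  using assms(3)
proof (induction w)
  case (Cons a w)
  then have "closure a \<subseteq> Y" using assms(1,2) by (simp add: closure_minimal)
  then show ?case by auto
qed simp

lemma cyl_append_subset:
  assumes "closed Y" "\<And>a. a \<in> \<alpha> \<Longrightarrow> a \<subseteq> Y" "set v \<subseteq> \<alpha>"
  shows "cyl Y TY (w @ v) \<subseteq> cyl Y TY w"
  unfolding cyl_append using cyl_mono[OF cyl_subset[OF assms]] .

lemma cyl_dist_le:
  fixes Y :: "'a::metric_space set"
  assumes "lam > 0" and "\<And>x y::'a. dist x y \<le> D"
    and expand: "\<And>a x y. a \<in> \<alpha> \<Longrightarrow> x \<in> closure a \<Longrightarrow> y \<in> closure a \<Longrightarrow>
                   lam * dist x y \<le> dist (TY a x) (TY a y)"
    and "set w \<subseteq> \<alpha>" "u \<in> cyl Y TY w" "v \<in> cyl Y TY w"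
  shows "dist u v \<le> D / lam ^ length w"
  using assms(4-6)
proof (induction w arbitrary: u v)
  case (Cons a w)
  then have "lam * dist u v \<le> dist (TY a u) (TY a v)" using expand by auto
  also have "\<dots> \<le> D / lam ^ length w" using Cons by auto
  finally show ?case using \<open>lam > 0\<close> by (simp add: field_simps)
qed (use assms(2) in simp)

lemma length_concat_map_ge:
  assumes "\<And>k. x k \<noteq> []"
  shows "n - m \<le> length (concat (map x [m..<n]))"
proof (induction n)
  case (Suc n)
  have "1 \<le> length (x n)" using assms[of n] by (cases "x n") auto
  then show ?case using Suc by (cases "m \<le> n") (auto simp: Suc_diff_le)
qed simp

lemma prefix_chain_eq_map_diagonal:
  assumes prefix: "\<And>n m. n \<le> m \<Longrightarrow> \<exists>r. W m = W n @ r"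
    and length: "\<And>n. n < length (W n)"
  shows "W n = map (\<lambda>i. W i ! i) [0..<length (W n)]"
proof (rule nth_equalityI)
  fix i assume i: "i < length (W n)"
  have "W n ! i = W i ! i"
  proof (cases "i \<le> n")
    case True
    then obtain r where "W n = W i @ r" using prefix by blast
    then show ?thesis using length[of i] by (simp add: nth_append)
  next
    case False
    then obtain r where "W i = W n @ r" using prefix[of n i] by auto
    then show ?thesis using i by (simp add: nth_append)
  qed
  then show "W n ! i = map (\<lambda>i. W i ! i) [0..<length (W n)] ! i" using i by simp
qed simp

locale expanding_tower =
  fixes Y :: "'a::complete_space set" and \<alpha> :: "'a set set"
    and Ta :: "'a set \<Rightarrow> 'a \<Rightarrow> 'a" and \<tau>A :: "'a set \<Rightarrow> nat"
    and lam Cl D :: real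
  assumes closed_Y: "closed Y" and Y_nonempty: "Y \<noteq> {}"
    and branch_subset: "\<And>a. a \<in> \<alpha> \<Longrightarrow> a \<subseteq> Y"
    and branch_bij: "\<And>a. a \<in> \<alpha> \<Longrightarrow> bij_betw (TYa Ta \<tau>A a) (closure a) Y"
    and branch_expand: "\<And>a x y. a \<in> \<alpha> \<Longrightarrow> x \<in> closure a \<Longrightarrow> y \<in> closure a \<Longrightarrow>
           lam * dist x y \<le> dist (TYa Ta \<tau>A a x) (TYa Ta \<tau>A a y)"
    and branch_bounded: "\<And>a x y l. a \<in> \<alpha> \<Longrightarrow> x \<in> closure a \<Longrightarrow> y \<in> closure a \<Longrightarrow> l < \<tau>A a \<Longrightarrow>
           dist ((Ta a ^^ l) x) ((Ta a ^^ l) y) \<le> Cl * dist (TYa Ta \<tau>A a x) (TYa Ta \<tau>A a y)"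
    and lam_gt_1: "lam > 1" and Cl_ge_1: "Cl \<ge> 1"
    and dist_le_D: "\<And>x y :: 'a. dist x y \<le> D"
begin

abbreviation TY :: "'a set \<Rightarrow> 'a \<Rightarrow> 'a" where "TY \<equiv> TYa Ta \<tau>A"

definition inv_branch :: "'a set \<Rightarrow> 'a \<Rightarrow> 'a" where
  "inv_branch a = inv_into (closure a) (TY a)"

lemma D_nonneg: "D \<ge> 0"
  using dist_le_D[of undefined undefined] by simp

lemma inv_branch_mem: "a \<in> \<alpha> \<Longrightarrow> y \<in> Y \<Longrightarrow> inv_branch a y \<in> closure a"
  using branch_bij unfolding inv_branch_def bij_betw_def by (metis inv_into_into)

lemma TY_inv_branch: "a \<in> \<alpha> \<Longrightarrow> y \<in> Y \<Longrightarrow> TY a (inv_branch a y) = y"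
  using branch_bij unfolding inv_branch_def bij_betw_def by (metis f_inv_into_f)

lemma cyl_subset_Y: "set w \<subseteq> \<alpha> \<Longrightarrow> cyl Y T w \<subseteq> Y"
  by (rule cyl_subset[where \<alpha>=\<alpha>]) (use closed_Y branch_subset in auto)

lemma cyl_append_subset_Y: "set v \<subseteq> \<alpha> \<Longrightarrow> cyl Y T (w @ v) \<subseteq> cyl Y T w"
  by (rule cyl_append_subset[where \<alpha>=\<alpha>]) (use closed_Y branch_subset in auto)

lemma inv_branch_lipschitz: "a \<in> \<alpha> \<Longrightarrow> (1 / lam)-lipschitz_on Y (inv_branch a)"
proof (rule lipschitz_onI)
  fix y y' assume "a \<in> \<alpha>" "y \<in> Y" "y' \<in> Y"
  then have "lam * dist (inv_branch a y) (inv_branch a y') \<le> dist y y'"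
    using branch_expand inv_branch_mem TY_inv_branch by metis
  then show "dist (inv_branch a y) (inv_branch a y') \<le> 1 / lam * dist y y'"
    using lam_gt_1 by (simp add: field_simps)
qed (use lam_gt_1 in simp)

lemma foldr_inv_branch_mem_cyl:
  assumes "\<And>i. b i \<in> \<alpha>" "y \<in> Y"
  shows "foldr (\<lambda>i. inv_branch (b i)) [k..<k+n] y \<in> cyl Y TY (map b [k..<k+n])"
proof (induction n arbitrary: k)
  case (Suc n)
  have "[k..<k + Suc n] = k # [Suc k..<Suc k + n]" by (simp add: upt_conv_Cons)
  moreover note Suc[of "Suc k"]
  moreover have "cyl Y TY (map b [Suc k..<Suc k + n]) \<subseteq> Y"
    by (rule cyl_subset_Y) (use assms(1) in auto)
  ultimately show ?case using assms(1) inv_branch_mem TY_inv_branch by auto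
qed (use assms(2) in simp)

lemma Cauchy_foldr_inv_branch:
  assumes b: "\<And>i. b i \<in> \<alpha>" and y: "y \<in> Y"
  shows "Cauchy (\<lambda>n. foldr (\<lambda>i. inv_branch (b i)) [k..<k+n] y)"
proof (rule metric_CauchyI)
  fix e :: real assume "e > 0"
  obtain M where M: "D / e < lam ^ M" using real_arch_pow[OF lam_gt_1] by blast
  have mem: "foldr (\<lambda>i. inv_branch (b i)) [k..<k+n] y \<in> cyl Y TY (map b [k..<k+M])"
    if "M \<le> n" for n
  proof -
    have split: "[k..<k+n] = [k..<k+M] @ [k+M..<k+n]"
      using that upt_add_eq_append[of k "k+M" "n-M"] by simp
    have "foldr (\<lambda>i. inv_branch (b i)) [k..<k+n] y
        \<in> cyl Y TY (map b [k..<k+M] @ map b [k+M..<k+n])"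
      using foldr_inv_branch_mem_cyl[of b, OF b y, where k=k and n=n] by (simp only: split map_append)
    moreover have "set (map b [k+M..<k+n]) \<subseteq> \<alpha>" using b by auto
    ultimately show ?thesis using cyl_append_subset_Y by blast
  qed
  have set_M: "set (map b [k..<k+M]) \<subseteq> \<alpha>" using b by auto
  have "D / lam ^ M < e" using M \<open>e > 0\<close> lam_gt_1 by (simp add: field_simps)
  moreover have "dist (foldr (\<lambda>i. inv_branch (b i)) [k..<k+m] y) (foldr (\<lambda>i. inv_branch (b i)) [k..<k+n] y)
      \<le> D / lam ^ M" if "M \<le> m" "M \<le> n" for m n
    using cyl_dist_le[where TY=TY, OF _ dist_le_D branch_expand set_M mem[OF that(1)] mem[OF that(2)]] lam_gt_1
    by simp
  ultimately show "\<exists>M. \<forall>m\<ge>M. \<forall>n\<ge>M.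
      dist (foldr (\<lambda>i. inv_branch (b i)) [k..<k+m] y) (foldr (\<lambda>i. inv_branch (b i)) [k..<k+n] y) < e"
    by (meson order.strict_trans1)
qed

text \<open>The cylinders need not be closed, as the branches are not assumed continuous. So a point
  z k is built for every shifted itinerary b k, b (k+1), ... at once, and continuity of the
  inverse branches gives z k = inv_branch (b k) (z (k+1)).\<close>
lemma ex_mem_cyl_itinerary:
  assumes b: "\<And>i. b i \<in> \<alpha>"
  shows "\<exists>z. \<forall>N. z \<in> cyl Y TY (map b [0..<N])"
proof -
  obtain y where y: "y \<in> Y" using Y_nonempty by blast
  define h where "h k n = foldr (\<lambda>i. inv_branch (b i)) [k..<k+n] y" for k n
  define z where "z k = lim (h k)" for k
  have h_lim: "h k \<longlonglongrightarrow> z k" for k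
    using Cauchy_convergent[OF Cauchy_foldr_inv_branch[of b, OF b y]]
    unfolding z_def h_def by (simp add: convergent_LIMSEQ_iff)
  have h_Y: "h k n \<in> Y" for k n
  proof -
    have "set (map b [k..<k+n]) \<subseteq> \<alpha>" using b by auto
    then show ?thesis
      using foldr_inv_branch_mem_cyl[of b, OF b y, where k=k and n=n] cyl_subset_Y
      unfolding h_def by blast
  qed
  have z_Y: "z k \<in> Y" for k
    using closed_sequentially[OF closed_Y _ h_lim] h_Y by blast
  have h_Suc: "h k (Suc n) = inv_branch (b k) (h (Suc k) n)" for k n
  proof -
    have "[k..<k + Suc n] = k # [Suc k..<Suc k + n]" by (simp add: upt_conv_Cons)
    then show ?thesis unfolding h_def by simp
  qed
  have z_inv: "z k = inv_branch (b k) (z (Suc k))" for k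
  proof (rule LIMSEQ_unique)
    show "(\<lambda>n. inv_branch (b k) (h (Suc k) n)) \<longlonglongrightarrow> inv_branch (b k) (z (Suc k))"
      using continuous_on_tendsto_compose[OF lipschitz_on_continuous_on[OF inv_branch_lipschitz[OF b]]
          h_lim z_Y] h_Y by simp
    show "(\<lambda>n. inv_branch (b k) (h (Suc k) n)) \<longlonglongrightarrow> z k"
      using LIMSEQ_Suc[OF h_lim[of k]] by (simp add: h_Suc)
  qed
  have "z k \<in> cyl Y TY (map b [k..<k+N])" for k N
  proof (induction N arbitrary: k)
    case (Suc N)
    have "[k..<k + Suc N] = k # [Suc k..<Suc k + N]" by (simp add: upt_conv_Cons)
    then show ?case
      using Suc[of "Suc k"] z_inv[of k] inv_branch_mem[OF b z_Y] TY_inv_branch[OF b z_Y] by simp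
  qed (simp add: z_Y)
  then show ?thesis by (metis add_0)
qed

lemma cyl_chain_unique:
  assumes W: "\<And>n. set (W n) \<subseteq> \<alpha>" "\<And>n. n < length (W n)"
    and p: "\<And>n. p \<in> cyl Y TY (W n)" and q: "\<And>n. q \<in> cyl Y TY (W n)"
  shows "p = q"
proof (rule ccontr)
  assume "p \<noteq> q"
  then have pq: "dist p q > 0" by simp
  obtain n where n: "D / dist p q < lam ^ n" using real_arch_pow[OF lam_gt_1] by blast
  have "dist p q \<le> D / lam ^ length (W n)"
    using cyl_dist_le[OF _ dist_le_D branch_expand W(1) p q] lam_gt_1 by simp
  also have "\<dots> \<le> D / lam ^ n"
    using lam_gt_1 W(2)[of n] D_nonneg by (auto intro!: divide_left_mono power_increasing)
  also have "\<dots> < dist p q" using n pq lam_gt_1 by (simp add: field_simps)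
  finally show False by simp
qed

lemma piX_mem_cyl:
  assumes x: "\<And>j. x j \<in> words \<alpha>"
  shows "piX Y Ta \<tau>A x \<in> cyl Y TY (concat (map x [0..<Suc n]))"
proof -
  define W where "W n = concat (map x [0..<Suc n])" for n
  have W_\<alpha>: "set (W n) \<subseteq> \<alpha>" for n using x by (auto simp: W_def words_def)
  have x_nonempty: "x j \<noteq> []" for j using x by (simp add: words_def)
  have W_length: "n < length (W n)" for n
    using length_concat_map_ge[where x=x and m=0 and n="Suc n", OF x_nonempty] by (simp add: W_def)
  have W_prefix: "\<exists>r. W m = W n @ r" if "n \<le> m" for n m
  proof -
    have "[0..<Suc m] = [0..<Suc n] @ [Suc n..<Suc m]"
      using that upt_add_eq_append[of 0 "Suc n" "m - n"] by simp
    then show ?thesis by (simp add: W_def)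
  qed
  \<comment> \<open>the letters of the infinite word x 0 x 1 x 2 ...\<close>
  define b where "b i = W i ! i" for i
  have W_eq: "W n = map b [0..<length (W n)]" for n
    unfolding b_def by (rule prefix_chain_eq_map_diagonal[OF W_prefix W_length])
  have b: "b i \<in> \<alpha>" for i
    using W_\<alpha>[of i] nth_mem[OF W_length[of i]] unfolding b_def by blast
  obtain z where z: "\<And>N. z \<in> cyl Y TY (map b [0..<N])"
    using ex_mem_cyl_itinerary[of b, OF b] by blast
  have z_W: "z \<in> cyl Y TY (W n)" for n by (subst W_eq) (rule z)
  have "\<exists>!p. p \<in> (\<Inter>n. cyl Y TY (W n))"
  proof (rule ex1I)
    show "z \<in> (\<Inter>n. cyl Y TY (W n))" using z_W by blast
  next
    fix p assume "p \<in> (\<Inter>n. cyl Y TY (W n))"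
    then show "p = z" using cyl_chain_unique[of W p z, OF W_\<alpha> W_length] z_W by blast
  qed
  moreover have "piX Y Ta \<tau>A x = (THE p. p \<in> (\<Inter>n. cyl Y TY (W n)))"
    by (simp add: piX_def W_def)
  ultimately have "piX Y Ta \<tau>A x \<in> (\<Inter>n. cyl Y TY (W n))"
    using theI' by metis
  then have "piX Y Ta \<tau>A x \<in> cyl Y TY (W n)" by blast
  then show ?thesis by (simp only: W_def)
qed

lemma Tword_dist_le:
  assumes "set w \<subseteq> \<alpha>" "set V \<subseteq> \<alpha>"
    and "u \<in> cyl Y TY (w @ V)" "v \<in> cyl Y TY (w @ V)" "l < hword \<tau>A w"
  shows "dist (Tword Ta \<tau>A w l u) (Tword Ta \<tau>A w l v) \<le> Cl * D / lam ^ length V"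
  using assms
proof (induction w arbitrary: u v l)
  case (Cons a w)
  then have a: "a \<in> \<alpha>" "set w \<subseteq> \<alpha>"
    and uv: "u \<in> closure a" "v \<in> closure a"
      "TY a u \<in> cyl Y TY (w @ V)" "TY a v \<in> cyl Y TY (w @ V)" by auto
  show ?case
  proof (cases "l < \<tau>A a")
    case True
    have "dist (TY a u) (TY a v) \<le> D / lam ^ length (w @ V)"
      using cyl_dist_le[OF _ dist_le_D branch_expand _ uv(3,4)] a Cons.prems(2) lam_gt_1 by simp
    also have "\<dots> \<le> D / lam ^ length V"
      using lam_gt_1 D_nonneg by (auto intro!: divide_left_mono power_increasing)
    finally have "Cl * dist (TY a u) (TY a v) \<le> Cl * (D / lam ^ length V)"
      by (rule mult_left_mono) (use Cl_ge_1 in simp)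
    then show ?thesis
      using True branch_bounded[OF a(1) uv(1,2) True] by simp
  next
    case False
    then have "Tword Ta \<tau>A (a # w) l = Tword Ta \<tau>A w (l - \<tau>A a) \<circ> TY a"
      by (simp add: TYa_def)
    moreover have "l - \<tau>A a < hword \<tau>A w" using Cons.prems(5) False by (simp add: hword_def)
    ultimately show ?thesis using Cons.IH[OF a(2) Cons.prems(2) uv(3,4)] by simp
  qed
qed (simp add: hword_def)

lemma piTower_dist_le_agree:
  assumes x: "x \<in> towerX \<alpha>" and y: "y \<in> towerX \<alpha>"
    and agree: "\<And>j. j \<le> t \<Longrightarrow> x j = y j" and l: "l < hword \<tau>A (x 0)"
  shows "dist (piTower Y Ta \<tau>A (x, l)) (piTower Y Ta \<tau>A (y, l)) \<le> Cl * D / lam ^ t"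
proof -
  define V where "V = concat (map x [1..<Suc t])"
  have x_words: "\<And>j. x j \<in> words \<alpha>" and y_words: "\<And>j. y j \<in> words \<alpha>"
    using x y by (auto simp: towerX_def)
  have split: "[0..<Suc t] = 0 # [1..<Suc t]" by (simp add: upt_conv_Cons)
  have x_cyl: "concat (map x [0..<Suc t]) = x 0 @ V" unfolding V_def split by simp
  have "map y [0..<Suc t] = map x [0..<Suc t]" using agree by simp
  then have y_cyl: "concat (map y [0..<Suc t]) = x 0 @ V" using x_cyl by (simp only:)
  have V_\<alpha>: "set V \<subseteq> \<alpha>" "set (x 0) \<subseteq> \<alpha>" using x_words by (auto simp: V_def words_def)
  have "t \<le> length V"
    using length_concat_map_ge[where x=x and m=1 and n="Suc t"] x_words by (simp add: V_def words_def)
  have "dist (piTower Y Ta \<tau>A (x, l)) (piTower Y Ta \<tau>A (y, l))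
      = dist (Tword Ta \<tau>A (x 0) l (piX Y Ta \<tau>A x)) (Tword Ta \<tau>A (x 0) l (piX Y Ta \<tau>A y))"
    using agree[of 0] by (simp add: piTower_def)
  also have "\<dots> \<le> Cl * D / lam ^ length V"
    using Tword_dist_le[OF V_\<alpha>(2,1) _ _ l] piX_mem_cyl[of x, OF x_words, of t] piX_mem_cyl[of y, OF y_words, of t]
    unfolding x_cyl y_cyl by blast
  also have "\<dots> \<le> Cl * D / lam ^ t"
    using lam_gt_1 Cl_ge_1 D_nonneg \<open>t \<le> length V\<close> by (auto intro!: divide_left_mono power_increasing)
  finally show ?thesis .
qed

lemma piTower_dist_le:
  assumes "p \<in> tower \<alpha> \<tau>A" "q \<in> tower \<alpha> \<tau>A"
  shows "dist (piTower Y Ta \<tau>A p) (piTower Y Ta \<tau>A q) \<le> lam * Cl * D * dTower (1 / lam) p q"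
proof -
  obtain x l y l' where p: "p = (x, l)" and q: "q = (y, l')" by fastforce
  have x: "x \<in> towerX \<alpha>" "l < hword \<tau>A (x 0)" and y: "y \<in> towerX \<alpha>"
    using assms p q by (auto simp: tower_def)
  have "1 \<le> lam * Cl" using mult_mono[of 1 lam 1 Cl] lam_gt_1 Cl_ge_1 by simp
  then have "1 * D \<le> lam * Cl * D" using D_nonneg by (rule mult_right_mono)
  then have trivial: "dist (piTower Y Ta \<tau>A p) (piTower Y Ta \<tau>A q) \<le> lam * Cl * D"
    using dist_le_D[of "piTower Y Ta \<tau>A p" "piTower Y Ta \<tau>A q"] by simp
  consider "l \<noteq> l'" | "l = l'" "x = y" | "l = l'" "x \<noteq> y" "(LEAST j. x j \<noteq> y j) = 0"
    | t where "l = l'" "x \<noteq> y" "(LEAST j. x j \<noteq> y j) = Suc t"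
    by (metis not0_implies_Suc)
  then show ?thesis
  proof cases
    case (4 t)
    have "x j = y j" if "j \<le> t" for j
      using not_less_Least[of j "\<lambda>j. x j \<noteq> y j"] that 4(3) by simp
    then have "dist (piTower Y Ta \<tau>A p) (piTower Y Ta \<tau>A q) \<le> Cl * D / lam ^ t"
      using piTower_dist_le_agree[OF x(1) y _ x(2)] p q 4(1) by simp
    also have "\<dots> = lam * Cl * D * (1 / lam) ^ Suc t"
      using lam_gt_1 by (simp add: power_one_over field_simps)
    finally show ?thesis using p q 4 by (simp add: dTower_def dX_def)
  qed (use trivial p q in \<open>auto simp: dTower_def dX_def\<close>)
qed

end

theorem proposition4p3:
  fixes T :: "'a::complete_space \<Rightarrow> 'a"
    and Y :: "'a set"
    and m :: "'a measure"
    and \<alpha> :: "'a set set"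
    and \<tau> :: "'a \<Rightarrow> nat"
    and \<tau>A :: "'a set \<Rightarrow> nat"
    and Ta :: "'a set \<Rightarrow> 'a \<Rightarrow> 'a"
    and \<eta> lam Cl K :: real
    and PA :: "'a set list pmf"
  assumes bounded_Lambda: "bounded (UNIV :: 'a set)"
    and T_meas: "T \<in> borel_measurable borel"
    and Y_closed: "closed Y"
    and m_sets: "sets m = sets (restrict_space borel Y)"
    and m_prob: "prob_space m"
    and \<alpha>_countable: "countable \<alpha>"
    and \<alpha>_sub: "\<forall>a\<in>\<alpha>. a \<subseteq> Y \<and> a \<in> sets m"
    and \<alpha>_disj: "disjoint \<alpha>"
    and \<alpha>_cover: "emeasure m (Y - \<Union>\<alpha>) = 0"
    and \<alpha>_pos: "\<forall>a\<in>\<alpha>. emeasure m a > 0"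
    and \<alpha>_bdry: "\<forall>a\<in>\<alpha>. emeasure m (closure a - a) = 0"
    and \<tau>_pos: "\<forall>y\<in>Y. \<tau> y \<ge> 1"
    and \<tau>_int: "integrable m (\<lambda>y. real (\<tau> y))"
    and \<tau>_const: "\<forall>a\<in>\<alpha>. \<forall>y\<in>a. \<tau> y = \<tau>A a"
    and \<tau>_return: "\<forall>y\<in>Y. (T ^^ \<tau> y) y \<in> Y"
    and \<eta>: "0 < \<eta>" "\<eta> \<le> 1"
    and lam: "lam > 1"
    and Cl: "Cl \<ge> 1"
    and K: "K \<ge> 1"
    and Ta_ae: "\<forall>a\<in>\<alpha>. \<forall>l<\<tau>A a. AE x in m. x \<in> closure a \<longrightarrow> (Ta a ^^ l) x = (T ^^ l) x"
    and TY_bij: "\<forall>a\<in>\<alpha>. bij_betw (TYa Ta \<tau>A a) (closure a) Y"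
    and expand: "\<forall>a\<in>\<alpha>. \<forall>x\<in>closure a. \<forall>y\<in>closure a.
         dist (TYa Ta \<tau>A a x) (TYa Ta \<tau>A a y) \<ge> lam * dist x y"
    and bdd_dist: "\<forall>a\<in>\<alpha>. \<forall>x\<in>closure a. \<forall>y\<in>closure a. \<forall>l<\<tau>A a.
         dist ((Ta a ^^ l) x) ((Ta a ^^ l) y) \<le> Cl * dist (TYa Ta \<tau>A a x) (TYa Ta \<tau>A a y)"
    and TY_meas: "\<forall>a\<in>\<alpha>. \<forall>E\<in>sets m. {x \<in> closure a. TYa Ta \<tau>A a x \<in> E} \<in> sets m"
    and nonsingular: "\<forall>a\<in>\<alpha>. \<forall>B\<in>sets m. B \<subseteq> closure a \<longrightarrow>
         TYa Ta \<tau>A a ` B \<in> sets m \<and>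
         (emeasure m B = 0 \<longleftrightarrow> emeasure m (TYa Ta \<tau>A a ` B) = 0)"
    and jacobian: "\<forall>a\<in>\<alpha>. \<exists>\<zeta> :: 'a \<Rightarrow> real.
         (\<forall>x\<in>closure a. \<zeta> x > 0) \<and>
         (\<forall>B\<in>sets m. B \<subseteq> closure a \<longrightarrow>
            emeasure m B = (\<integral>\<^sup>+ y. indicator (TYa Ta \<tau>A a ` B) y *
                 ennreal (\<zeta> (inv_into (closure a) (TYa Ta \<tau>A a) y)) \<partial>m)) \<and>
         (\<forall>x\<in>closure a. \<forall>y\<in>closure a.
            \<bar>ln (\<zeta> x) - ln (\<zeta> y)\<bar> \<le> K * dist (TYa Ta \<tau>A a x) (TYa Ta \<tau>A a y) powr \<eta>)"
    and PA_words: "set_pmf PA \<subseteq> words \<alpha>"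
  shows "\<forall>p\<in>tower \<alpha> \<tau>A. \<forall>q\<in>tower \<alpha> \<tau>A.
           dist (piTower Y Ta \<tau>A p) (piTower Y Ta \<tau>A q)
             \<le> (lam * Cl * diameter (UNIV :: 'a set)) * dTower (1 / lam) p q"
proof (intro ballI)
  fix p q assume p: "p \<in> tower \<alpha> \<tau>A" and q: "q \<in> tower \<alpha> \<tau>A"
  obtain x l where "p = (x, l)" "x \<in> towerX \<alpha>" using p by (auto simp: tower_def)
  then have "x 0 \<noteq> []" "set (x 0) \<subseteq> \<alpha>" by (auto simp: towerX_def words_def)
  then obtain a where a: "a \<in> \<alpha>" using hd_in_set by blast
  then have "a \<noteq> {}" using \<alpha>_pos by (metis emeasure_empty less_irrefl)
  then have "Y \<noteq> {}" using a \<alpha>_sub by blast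
  then interpret expanding_tower Y \<alpha> Ta \<tau>A lam Cl "diameter (UNIV :: 'a set)"
    using Y_closed \<alpha>_sub TY_bij expand bdd_dist lam Cl
      diameter_bounded_bound[OF bounded_Lambda]
    by unfold_locales auto
  show "dist (piTower Y Ta \<tau>A p) (piTower Y Ta \<tau>A q)
          \<le> (lam * Cl * diameter (UNIV :: 'a set)) * dTower (1 / lam) p q"
    using piTower_dist_le[OF p q] .
qed

end
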